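(* Let $(a_n)\in\ell_1$ with $\sum_n|a_n|=1$ and $\frac12<\sup_{n\in\mathbb N}|a_n|<1$. Then the hyperplane $Y=\{x\in c_0:\sum_n a_nx_n=0\}$ has property-$(SU)$ in $c_0$ but does not have property-$(HB)$ in $c_0$.
   Context: $c_0$ carries the sup norm and $c_0^*=\ell_1$. $Y^\perp=\{x^*\in\ell_1:x^*|_Y=0\}$. $Y$ has property-$(SU)$ in $X$ if there is a bounded linear projection $P$ on $X^*$ with range $Y^\perp$ such that, with $G=(I-P)(X^* )$, for every $x^*=y^\#+y^\perp$ with $y^\#\in G$, $0\ne y^\perp\in Y^\perp$, one has $\|x^*\|>\|y^\#\|$. $Y$ has property-$(HB)$ in $X$ if moreover such a $P$ can be chosen with $\|P\|=1$ and also $\|x^*\|\ge\|y^\perp\|$ for all such decompositions. *)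

theory Defs
  imports Complex_Main
begin

text \<open>Real sequences are modelled as functions nat => real.
  c_0 = sequences tending to 0 (sup norm); its dual is identified with l_1,
  the duality being (x*, x) |-> sum_n x*_n x_n.\<close>

definition c0 :: "(nat \<Rightarrow> real) set" where
  "c0 = {x. x \<longlonglongrightarrow> 0}"

definition l1 :: "(nat \<Rightarrow> real) set" where
  "l1 = {f. summable (\<lambda>n. \<bar>f n\<bar>)}"

definition l1norm :: "(nat \<Rightarrow> real) \<Rightarrow> real" where
  "l1norm f = (\<Sum>n. \<bar>f n\<bar>)"

definition pairing :: "(nat \<Rightarrow> real) \<Rightarrow> (nat \<Rightarrow> real) \<Rightarrow> real" where
  "pairing f x = (\<Sum>n. f n * x n)"

definition annih :: "(nat \<Rightarrow> real) set \<Rightarrow> (nat \<Rightarrow> real) set" where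
  "annih Y = {f \<in> l1. \<forall>y\<in>Y. pairing f y = 0}"

definition l1_bounded_linear :: "((nat \<Rightarrow> real) \<Rightarrow> (nat \<Rightarrow> real)) \<Rightarrow> bool" where
  "l1_bounded_linear P \<longleftrightarrow>
     (\<forall>f\<in>l1. P f \<in> l1) \<and>
     (\<forall>f\<in>l1. \<forall>g\<in>l1. P (\<lambda>n. f n + g n) = (\<lambda>n. P f n + P g n)) \<and>
     (\<forall>c. \<forall>f\<in>l1. P (\<lambda>n. c * f n) = (\<lambda>n. c * P f n)) \<and>
     (\<exists>C. \<forall>f\<in>l1. l1norm (P f) \<le> C * l1norm f)"

definition l1_opnorm :: "((nat \<Rightarrow> real) \<Rightarrow> (nat \<Rightarrow> real)) \<Rightarrow> real" where
  "l1_opnorm P = Sup {l1norm (P f) | f. f \<in> l1 \<and> l1norm f \<le> 1}"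

definition proj_onto_annih :: "(nat \<Rightarrow> real) set \<Rightarrow> ((nat \<Rightarrow> real) \<Rightarrow> (nat \<Rightarrow> real)) \<Rightarrow> bool" where
  "proj_onto_annih Y P \<longleftrightarrow> l1_bounded_linear P \<and> (\<forall>f\<in>l1. P (P f) = P f) \<and> P ` l1 = annih Y"

definition compl_range :: "((nat \<Rightarrow> real) \<Rightarrow> (nat \<Rightarrow> real)) \<Rightarrow> (nat \<Rightarrow> real) set" where
  "compl_range P = (\<lambda>f. \<lambda>n. f n - P f n) ` l1"

definition SU_cond :: "(nat \<Rightarrow> real) set \<Rightarrow> ((nat \<Rightarrow> real) \<Rightarrow> (nat \<Rightarrow> real)) \<Rightarrow> bool" where
  "SU_cond Y P \<longleftrightarrow> (\<forall>g\<in>compl_range P. \<forall>h\<in>annih Y. h \<noteq> (\<lambda>_. 0) \<longrightarrow>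
       l1norm (\<lambda>n. g n + h n) > l1norm g)"

definition HB_cond :: "(nat \<Rightarrow> real) set \<Rightarrow> ((nat \<Rightarrow> real) \<Rightarrow> (nat \<Rightarrow> real)) \<Rightarrow> bool" where
  "HB_cond Y P \<longleftrightarrow> (\<forall>g\<in>compl_range P. \<forall>h\<in>annih Y. h \<noteq> (\<lambda>_. 0) \<longrightarrow>
       l1norm (\<lambda>n. g n + h n) \<ge> l1norm h)"

definition property_SU_c0 :: "(nat \<Rightarrow> real) set \<Rightarrow> bool" where
  "property_SU_c0 Y \<longleftrightarrow> (\<exists>P. proj_onto_annih Y P \<and> SU_cond Y P)"

definition property_HB_c0 :: "(nat \<Rightarrow> real) set \<Rightarrow> bool" where
  "property_HB_c0 Y \<longleftrightarrow>
     (\<exists>P. proj_onto_annih Y P \<and> SU_cond Y P \<and> l1_opnorm P = 1 \<and> HB_cond Y P)"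

end

theory Submission
  imports Defs
begin

text \<open>Pick k with 1/2 < |a k| < 1 and put m = |a k|. The annihilator of the kernel Y of a is
  the line spanned by a, so every projection onto it has the form P f = phi(f) a.

  For (SU) take phi(f) = f k / a k. Then every g in G vanishes at k, and adding c a to g gains
  |c| m at coordinate k while losing at most |c| (1 - m) elsewhere; as m > 1/2 this is a net gain.

  (HB) asks for such a projection of norm one, which forces |phi(f)| \<le> ||f||. Splitting
  a = a k e_k + a(k := 0) in phi(a) = 1 then leaves no room: phi(e_k) = sgn (a k). So
  g = e_k - sgn (a k) a lies in G, and adding a multiple h of a gives g + h = e_k - a / a k;
  for m > 1/2 this lowers the norm from 2 (1 - m) to (1 - m) / m, violating (SU).\<close>

abbreviation c0_kernel :: "(nat \<Rightarrow> real) \<Rightarrow> (nat \<Rightarrow> real) set" where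
  "c0_kernel a \<equiv> {x \<in> c0. pairing a x = 0}"

definition unit_vec :: "nat \<Rightarrow> nat \<Rightarrow> real" where
  "unit_vec k = (\<lambda>n. if n = k then 1 else 0)"

lemma l1_iff_summable: "f \<in> l1 \<longleftrightarrow> summable (\<lambda>n. \<bar>f n\<bar>)"
  by (simp add: l1_def)

lemma abs_le_l1norm: "f \<in> l1 \<Longrightarrow> \<bar>f k\<bar> \<le> l1norm f"
  unfolding l1_iff_summable l1norm_def
  using sum_le_suminf[of "\<lambda>n. \<bar>f n\<bar>" "{k}"] by auto

lemma l1norm_nonneg: "f \<in> l1 \<Longrightarrow> 0 \<le> l1norm f"
  unfolding l1_iff_summable l1norm_def by (simp add: suminf_nonneg)

lemma l1norm_eq_0_iff: "f \<in> l1 \<Longrightarrow> l1norm f = 0 \<longleftrightarrow> f = (\<lambda>_. 0)"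
  unfolding l1_iff_summable l1norm_def by (auto simp: suminf_eq_zero_iff fun_eq_iff)

lemma l1_lincomb:
  assumes "f \<in> l1" "g \<in> l1"
  shows "(\<lambda>n. s * f n + t * g n) \<in> l1"
proof -
  have "summable (\<lambda>n. \<bar>s\<bar> * \<bar>f n\<bar> + \<bar>t\<bar> * \<bar>g n\<bar>)"
    using assms by (auto simp: l1_iff_summable intro!: summable_add summable_mult)
  then show ?thesis
    unfolding l1_iff_summable
    by (rule summable_comparison_test[rotated])
       (auto intro!: exI[of _ 0] order.trans[OF abs_triangle_ineq] simp: abs_mult)
qed

lemma l1_scale: "f \<in> l1 \<Longrightarrow> (\<lambda>n. c * f n) \<in> l1"
  using l1_lincomb[of f f c 0] by simp

lemma l1_add: "f \<in> l1 \<Longrightarrow> g \<in> l1 \<Longrightarrow> (\<lambda>n. f n + g n) \<in> l1"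
  using l1_lincomb[of f g 1 1] by simp

lemma l1_fun_upd: "f \<in> l1 \<Longrightarrow> f(k := x) \<in> l1"
  unfolding l1_iff_summable
  by (rule summable_comparison_test[where g = "\<lambda>n. \<bar>f n\<bar> + (if n = k then \<bar>x\<bar> else 0)"])
     (auto intro!: summable_add summable_single)

lemma l1norm_scale: "f \<in> l1 \<Longrightarrow> l1norm (\<lambda>n. c * f n) = \<bar>c\<bar> * l1norm f"
  unfolding l1_iff_summable l1norm_def by (simp add: abs_mult suminf_mult)

lemma l1norm_triangle:
  assumes "f \<in> l1" "g \<in> l1"
  shows "l1norm (\<lambda>n. f n + g n) \<le> l1norm f + l1norm g"
proof -
  have "summable (\<lambda>n. \<bar>f n\<bar>)" "summable (\<lambda>n. \<bar>g n\<bar>)" "summable (\<lambda>n. \<bar>f n + g n\<bar>)"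
    using assms l1_add[OF assms] by (simp_all add: l1_iff_summable)
  then have "(\<Sum>n. \<bar>f n + g n\<bar>) \<le> (\<Sum>n. \<bar>f n\<bar> + \<bar>g n\<bar>)"
    by (intro suminf_le abs_triangle_ineq summable_add)
  with \<open>summable (\<lambda>n. \<bar>f n\<bar>)\<close> \<open>summable (\<lambda>n. \<bar>g n\<bar>)\<close> show ?thesis
    unfolding l1norm_def by (simp add: suminf_add)
qed

lemma l1norm_fun_upd:
  assumes "f \<in> l1"
  shows "l1norm (f(k := x)) = l1norm f - \<bar>f k\<bar> + \<bar>x\<bar>"
proof -
  have summ: "summable (\<lambda>n. \<bar>f n\<bar>)" using assms by (simp add: l1_iff_summable)
  have single: "(\<lambda>n. if n = k then \<bar>x\<bar> - \<bar>f k\<bar> else 0) sums (\<bar>x\<bar> - \<bar>f k\<bar>)"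
    using sums_single[of k "\<lambda>_. \<bar>x\<bar> - \<bar>f k\<bar>"] by simp
  have "(\<lambda>n. \<bar>(f(k := x)) n\<bar>) = (\<lambda>n. \<bar>f n\<bar> + (if n = k then \<bar>x\<bar> - \<bar>f k\<bar> else 0))"
    by auto
  then show ?thesis
    unfolding l1norm_def using suminf_add[OF summ sums_summable[OF single]] sums_unique[OF single]
    by simp
qed

lemma l1norm_unit_vec_add_scale:
  assumes "a \<in> l1"
  shows "l1norm (\<lambda>n. unit_vec k n + t * a n) = \<bar>1 + t * a k\<bar> + \<bar>t\<bar> * (l1norm a - \<bar>a k\<bar>)"
proof -
  have "(\<lambda>n. unit_vec k n + t * a n) = (\<lambda>n. t * a n)(k := 1 + t * a k)"
    by (auto simp: unit_vec_def)
  then show ?thesis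
    using l1norm_fun_upd[OF l1_scale[OF assms]] l1norm_scale[OF assms]
    by (simp add: abs_mult algebra_simps)
qed

lemma unit_vec_l1: "unit_vec k \<in> l1"
  using l1_fun_upd[of "\<lambda>_. 0" k 1] by (simp add: l1_iff_summable unit_vec_def fun_upd_def)

lemma bdd_above_abs_l1: "f \<in> l1 \<Longrightarrow> bdd_above (range (\<lambda>n. \<bar>f n\<bar>))"
  by (auto intro!: bdd_aboveI abs_le_l1norm)

lemma l1norm_le_opnorm:
  assumes P: "l1_bounded_linear P" and f: "f \<in> l1"
  shows "l1norm (P f) \<le> l1_opnorm P * l1norm f"
proof -
  let ?S = "{l1norm (P f) | f. f \<in> l1 \<and> l1norm f \<le> 1}"
  obtain C where C: "\<And>f. f \<in> l1 \<Longrightarrow> l1norm (P f) \<le> C * l1norm f"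
    using P unfolding l1_bounded_linear_def by blast
  have "bdd_above ?S"
  proof (rule bdd_aboveI)
    fix x assume "x \<in> ?S"
    then obtain f where f: "f \<in> l1" "l1norm f \<le> 1" and x: "x = l1norm (P f)" by blast
    have "C * l1norm f \<le> \<bar>C\<bar> * 1" using f l1norm_nonneg[OF f(1)] by (intro mult_mono) auto
    then show "x \<le> \<bar>C\<bar>" using C[OF f(1)] x by linarith
  qed
  then have opnorm: "l1norm (P g) \<le> l1_opnorm P" if "g \<in> l1" "l1norm g \<le> 1" for g
    unfolding l1_opnorm_def using that by (intro cSup_upper) auto
  have P_scale: "P (\<lambda>n. c * f n) = (\<lambda>n. c * P f n)" for c
    using P f unfolding l1_bounded_linear_def by blast
  have Pf: "P f \<in> l1" using P f unfolding l1_bounded_linear_def by blast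
  show ?thesis
  proof (cases "l1norm f = 0")
    case True
    then have "f = (\<lambda>_. 0)" using l1norm_eq_0_iff[OF f] by simp
    then have "P f = (\<lambda>_. 0)" using P_scale[of 0] by simp
    then show ?thesis using True by (simp add: l1norm_def)
  next
    case False
    define L where "L = l1norm f"
    have L: "L > 0" using False l1norm_nonneg[OF f] by (simp add: L_def)
    have "l1norm (\<lambda>n. (1 / L) * f n) = 1" unfolding l1norm_scale[OF f] using L by (simp add: L_def)
    then have "l1norm (P (\<lambda>n. (1 / L) * f n)) \<le> l1_opnorm P" by (intro opnorm l1_scale f) simp
    moreover have "l1norm (P (\<lambda>n. (1 / L) * f n)) = l1norm (P f) / L"
      using L by (simp only: P_scale l1norm_scale[OF Pf]) simp
    ultimately show ?thesis using L by (simp add: L_def divide_le_eq mult.commute)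
  qed
qed

lemma pairing_summable:
  assumes "a \<in> l1" "y \<in> c0"
  shows "summable (\<lambda>n. a n * y n)"
proof -
  have "Bseq y" using assms(2) unfolding c0_def by (auto intro: convergent_imp_Bseq convergentI)
  then obtain K where K: "\<And>n. \<bar>y n\<bar> \<le> K" by (metis BseqE real_norm_def)
  have bound: "norm (a n * y n) \<le> K * \<bar>a n\<bar>" for n
    using mult_left_mono[OF K[of n] abs_ge_zero[of "a n"]] by (simp add: abs_mult mult.commute)
  have "summable (\<lambda>n. K * \<bar>a n\<bar>)"
    using assms(1) by (simp add: l1_iff_summable summable_mult)
  from summable_comparison_test'[OF this bound] show ?thesis .
qed

text \<open>Testing against the finitely supported y = e_n - (a n / a k) e_k in the kernel shows that
  an annihilating functional is proportional to a.\<close>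

lemma annih_c0_kernel:
  assumes "a \<in> l1" "a k \<noteq> 0"
  shows "annih (c0_kernel a) = range (\<lambda>c n. c * a n)"
proof
  show "range (\<lambda>c n. c * a n) \<subseteq> annih (c0_kernel a)"
  proof (clarsimp simp: annih_def l1_scale[OF assms(1)])
    fix c y assume "y \<in> c0" "pairing a y = 0"
    then show "pairing (\<lambda>n. c * a n) y = 0"
      using suminf_mult[OF pairing_summable[OF assms(1)], of y c]
      unfolding pairing_def by (simp add: mult.assoc)
  qed
next
  show "annih (c0_kernel a) \<subseteq> range (\<lambda>c n. c * a n)"
  proof
    fix f assume f: "f \<in> annih (c0_kernel a)"
    have "f = (\<lambda>n. f k / a k * a n)"
    proof
      fix n
      define y where "y = (\<lambda>i. unit_vec n i - (a n / a k) * unit_vec k i)"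
      have y0: "\<And>i. i \<notin> {n, k} \<Longrightarrow> y i = 0" by (simp add: y_def unit_vec_def)
      then have "\<forall>\<^sub>F i in sequentially. y i = 0"
        unfolding eventually_sequentially by (intro exI[of _ "Suc (max n k)"]) (auto intro!: y0)
      then have "y \<in> c0" unfolding c0_def by (simp add: tendsto_eventually)
      have pairing_y: "pairing g y = g n - a n / a k * g k" for g
      proof -
        have "pairing g y = (\<Sum>i\<in>{n, k}. g i * y i)"
          unfolding pairing_def by (rule suminf_finite) (use y0 in auto)
        then show ?thesis using assms(2) by (cases "n = k") (simp_all add: y_def unit_vec_def)
      qed
      have "pairing a y = 0" using assms(2) by (simp add: pairing_y)
      with \<open>y \<in> c0\<close> f have "pairing f y = 0" by (auto simp: annih_def)
      then show "f n = f k / a k * a n" by (simp add: pairing_y)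
    qed
    then show "f \<in> range (\<lambda>c n. c * a n)" by (metis rangeI)
  qed
qed

lemma proj_onto_annih_c0_kernel:
  assumes "proj_onto_annih (c0_kernel a) P" "a \<in> l1" "a k \<noteq> 0" "f \<in> l1"
  shows "P f = (\<lambda>n. P f k / a k * a n)"
proof -
  have "P f \<in> annih (c0_kernel a)" using assms(1,4) unfolding proj_onto_annih_def by blast
  then obtain c where "P f = (\<lambda>n. c * a n)" using annih_c0_kernel[OF assms(2,3)] by auto
  then show ?thesis using assms(3) by simp
qed

lemma proj_onto_annih_fixes:
  assumes "proj_onto_annih Y P" "g \<in> annih Y"
  shows "P g = g"
  using assms unfolding proj_onto_annih_def by (metis imageE)

lemma l1norm_add_multiple_ge:
  assumes a: "a \<in> l1" and g: "g \<in> l1" "g k = 0"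
  shows "l1norm g + \<bar>c\<bar> * (2 * \<bar>a k\<bar> - l1norm a) \<le> l1norm (\<lambda>n. g n + c * a n)"
proof -
  define u where "u = (\<lambda>n. g n + c * a n)"
  define r where "r = a(k := 0)"
  have ul: "u \<in> l1" unfolding u_def by (intro l1_add l1_scale a g)
  have rl: "r \<in> l1" unfolding r_def by (rule l1_fun_upd[OF a])
  have "u(k := 0) = (\<lambda>n. g n + c * r n)" using g(2) by (auto simp: u_def r_def)
  then have g_eq: "g = (\<lambda>n. (u(k := 0)) n + (- c) * r n)" by simp
  have "l1norm g \<le> l1norm (u(k := 0)) + l1norm (\<lambda>n. (- c) * r n)"
    unfolding g_eq by (intro l1norm_triangle l1_fun_upd l1_scale ul rl)
  moreover have "l1norm (u(k := 0)) = l1norm u - \<bar>c\<bar> * \<bar>a k\<bar>"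
    unfolding l1norm_fun_upd[OF ul] using g(2) by (simp add: u_def abs_mult)
  moreover have "l1norm r = l1norm a - \<bar>a k\<bar>" unfolding r_def l1norm_fun_upd[OF a] by simp
  then have "l1norm (\<lambda>n. (- c) * r n) = \<bar>c\<bar> * (l1norm a - \<bar>a k\<bar>)"
    unfolding l1norm_scale[OF rl] by simp
  ultimately show ?thesis unfolding u_def by (simp add: algebra_simps)
qed

lemma property_SU_c0_kernel:
  assumes a: "a \<in> l1" and big: "l1norm a < 2 * \<bar>a k\<bar>"
  shows "property_SU_c0 (c0_kernel a)"
proof -
  have ak: "a k \<noteq> 0" using big l1norm_nonneg[OF a] by auto
  define P where "P = (\<lambda>(f :: nat \<Rightarrow> real) n. f k / a k * a n)"
  have "l1_bounded_linear P"
    unfolding l1_bounded_linear_def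
  proof (intro conjI ballI allI exI)
    fix f :: "nat \<Rightarrow> real" assume f: "f \<in> l1"
    show "P f \<in> l1" unfolding P_def by (rule l1_scale[OF a])
    have "l1norm (P f) = \<bar>f k\<bar> * l1norm a / \<bar>a k\<bar>"
      unfolding P_def l1norm_scale[OF a] by (simp add: abs_divide)
    also have "\<dots> \<le> l1norm f * l1norm a / \<bar>a k\<bar>"
      using abs_le_l1norm[OF f] l1norm_nonneg[OF a] by (intro divide_right_mono mult_right_mono) auto
    finally show "l1norm (P f) \<le> (l1norm a / \<bar>a k\<bar>) * l1norm f" by (simp add: ac_simps)
  qed (auto simp: P_def add_divide_distrib distrib_right)
  moreover have "P ` l1 = annih (c0_kernel a)"
  proof -
    have "P ` l1 \<subseteq> range (\<lambda>c n. c * a n)" unfolding P_def image_subset_iff by (intro ballI rangeI)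
    moreover have "range (\<lambda>c n. c * a n) \<subseteq> P ` l1"
    proof (rule image_subsetI)
      fix c :: real
      show "(\<lambda>n. c * a n) \<in> P ` l1"
        using ak by (intro image_eqI[OF _ l1_scale[OF a]]) (simp add: P_def)
    qed
    ultimately show ?thesis unfolding annih_c0_kernel[OF a ak] by (rule equalityI)
  qed
  ultimately have proj: "proj_onto_annih (c0_kernel a) P"
    using ak by (simp add: proj_onto_annih_def P_def)
  have "SU_cond (c0_kernel a) P"
    unfolding SU_cond_def
  proof (intro ballI impI)
    fix g h assume g: "g \<in> compl_range P" and h: "h \<in> annih (c0_kernel a)"
      and h0: "h \<noteq> (\<lambda>_. 0)"
    from g obtain f where f: "f \<in> l1" and g_eq: "g = (\<lambda>n. f n - P f n)"
      unfolding compl_range_def by blast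
    have "g \<in> l1" unfolding g_eq P_def using l1_lincomb[OF f a, of 1 "- (f k / a k)"] by simp
    moreover have "g k = 0" using ak by (simp add: g_eq P_def)
    moreover obtain c where hc: "h = (\<lambda>n. c * a n)" using h annih_c0_kernel[OF a ak] by auto
    moreover have "c \<noteq> 0" using h0 hc by auto
    then have "0 < \<bar>c\<bar> * (2 * \<bar>a k\<bar> - l1norm a)" using big by simp
    ultimately show "l1norm g < l1norm (\<lambda>n. g n + h n)"
      using l1norm_add_multiple_ge[OF a, of g k c] by simp
  qed
  with proj show ?thesis unfolding property_SU_c0_def by blast
qed

lemma norm_one_proj_unit_vec:
  assumes proj: "proj_onto_annih (c0_kernel a) P" and norm_one: "l1_opnorm P = 1"
    and a: "a \<in> l1" "l1norm a = 1" and ak: "a k \<noteq> 0"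
  shows "P (unit_vec k) = (\<lambda>n. sgn (a k) * a n)"
proof -
  define \<phi> where "\<phi> f = P f k / a k" for f
  have P_lin: "l1_bounded_linear P" using proj by (simp add: proj_onto_annih_def)
  have P_eq: "P f = (\<lambda>n. \<phi> f * a n)" if "f \<in> l1" for f
    unfolding \<phi>_def by (rule proj_onto_annih_c0_kernel[OF proj a(1) ak that])
  have \<phi>_bound: "\<bar>\<phi> f\<bar> \<le> l1norm f" if "f \<in> l1" for f
    using l1norm_le_opnorm[OF P_lin that] norm_one P_eq[OF that] by (simp add: l1norm_scale a)
  define e where "e = unit_vec k"
  define r where "r = a(k := 0)"
  have el: "e \<in> l1" and rl: "r \<in> l1" using unit_vec_l1 l1_fun_upd[OF a(1)] by (auto simp: e_def r_def)
  have "a \<in> annih (c0_kernel a)"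
    using annih_c0_kernel[OF a(1) ak] rangeI[of "\<lambda>c n. c * a n" 1] by simp
  then have Pa: "P a = a" by (rule proj_onto_annih_fixes[OF proj])
  have a_split: "a = (\<lambda>n. a k * e n + r n)" by (auto simp: e_def r_def unit_vec_def)
  have "P a = (\<lambda>n. a k * P e n + P r n)"
    using P_lin el rl l1_scale[OF el] unfolding l1_bounded_linear_def by (subst (1) a_split) simp
  then have "a = (\<lambda>n. a k * P e n + P r n)" unfolding Pa .
  then have "a k = a k * P e k + P r k" by (rule fun_cong)
  then have "a k * \<phi> e + \<phi> r = 1" using ak by (simp add: \<phi>_def field_simps)
  moreover have "\<bar>\<phi> r\<bar> \<le> 1 - \<bar>a k\<bar>" using \<phi>_bound[OF rl] l1norm_fun_upd[OF a(1)] a(2) by (simp add: r_def)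
  moreover have "\<bar>a k * \<phi> e\<bar> \<le> \<bar>a k\<bar>"
    using \<phi>_bound[OF el] unit_vec_l1 l1norm_unit_vec_add_scale[OF a(1), of k 0]
    by (simp add: e_def abs_mult mult_left_le)
  ultimately have "a k * \<phi> e = \<bar>a k\<bar>" by linarith
  then have "\<phi> e = sgn (a k)" using ak by (simp add: abs_sgn field_simps)
  then show ?thesis using P_eq[OF el] by (simp add: e_def)
qed

lemma not_property_HB_c0_kernel:
  assumes a: "a \<in> l1" "l1norm a = 1" and m: "1/2 < \<bar>a k\<bar>" "\<bar>a k\<bar> < 1"
  shows "\<not> property_HB_c0 (c0_kernel a)"
proof
  assume "property_HB_c0 (c0_kernel a)"
  then obtain P where proj: "proj_onto_annih (c0_kernel a) P" and su: "SU_cond (c0_kernel a) P"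
    and norm_one: "l1_opnorm P = 1"
    unfolding property_HB_c0_def by blast
  have ak: "a k \<noteq> 0" using m by auto
  define g where "g = (\<lambda>n. unit_vec k n + (- sgn (a k)) * a n)"
  define h where "h = (\<lambda>n. (sgn (a k) - 1 / a k) * a n)"
  have "g \<in> compl_range P"
    unfolding compl_range_def g_def
    by (rule image_eqI[OF _ unit_vec_l1[of k]]) (simp add: norm_one_proj_unit_vec[OF proj norm_one a ak])
  moreover have "h \<in> annih (c0_kernel a)" using annih_c0_kernel[OF a(1) ak] by (simp add: h_def)
  moreover have "h k = \<bar>a k\<bar> - 1" using ak by (simp add: h_def left_diff_distrib abs_sgn)
  then have "h \<noteq> (\<lambda>_. 0)" using m by force
  ultimately have "l1norm g < l1norm (\<lambda>n. g n + h n)"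
    using su unfolding SU_cond_def by blast
  moreover have "sgn (a k) * a k = \<bar>a k\<bar>" "\<bar>sgn (a k)\<bar> = 1"
    using ak by (simp_all add: abs_sgn mult.commute)
  then have "l1norm g = 2 * (1 - \<bar>a k\<bar>)"
    unfolding g_def l1norm_unit_vec_add_scale[OF a(1)] using a(2) m by simp
  moreover have "l1norm (\<lambda>n. g n + h n) = (1 - \<bar>a k\<bar>) / \<bar>a k\<bar>"
  proof -
    have "(\<lambda>n. g n + h n) = (\<lambda>n. unit_vec k n + (- 1 / a k) * a n)"
      by (auto simp: g_def h_def algebra_simps)
    then show ?thesis
      using l1norm_unit_vec_add_scale[OF a(1), of k "- 1 / a k"] ak a(2) by (simp add: abs_divide)
  qed
  ultimately have "(2 * \<bar>a k\<bar>) * (1 - \<bar>a k\<bar>) < 1 * (1 - \<bar>a k\<bar>)"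
    using m by (simp add: field_simps)
  then have "2 * \<bar>a k\<bar> < 1" using mult_less_cancel_right_pos[of "1 - \<bar>a k\<bar>"] m by simp
  with m show False by simp
qed

theorem theorem3p16:
  fixes a :: "nat \<Rightarrow> real"
  assumes "a \<in> l1"
    and "l1norm a = 1"
    and "1/2 < (SUP n. \<bar>a n\<bar>)"
    and "(SUP n. \<bar>a n\<bar>) < 1"
  shows "property_SU_c0 {x \<in> c0. pairing a x = 0} \<and>
         \<not> property_HB_c0 {x \<in> c0. pairing a x = 0}"
proof -
  have bdd: "bdd_above (range (\<lambda>n. \<bar>a n\<bar>))" by (rule bdd_above_abs_l1[OF assms(1)])
  obtain k where "1/2 < \<bar>a k\<bar>" using less_cSUP_iff[OF _ bdd] assms(3) by blast
  moreover have "\<bar>a k\<bar> < 1" using cSUP_upper[OF _ bdd, of k] assms(4) by simp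
  ultimately show ?thesis
    using property_SU_c0_kernel[OF assms(1), of k] not_property_HB_c0_kernel[OF assms(1,2)] assms(2)
    by simp
qed

end
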